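(* Let $\phi(t)=\mathbf{E}e^{itY}$ be the characteristic function of the limiting Quicksort random variable $Y$. Then $|\phi(t)|\le 2|t|^{-1/2}$ for every real $t\neq 0$.
   Context: Let $g(u):=2u\ln u+2(1-u)\ln(1-u)+1$ for $u\in(0,1)$. The limiting Quicksort random variable $Y$ is the limit in distribution of $(X_n-\mathbf{E}X_n)/n$, where $X_n$ is the number of comparisons used by randomized Quicksort on $n$ distinct numbers; equivalently, its law is the unique law with $\mathbf{E}Y=0$ and finite variance satisfying $Y\overset{d}{=}UY+(1-U)Z+g(U)$, where on the right $U,Y,Z$ are independent, $Z\overset{d}{=}Y$ and $U$ is uniform on $(0,1)$. *)

theory Defs
  imports "HOL-Probability.Probability"
begin

definition qs_toll :: "real \<Rightarrow> real" where
  "qs_toll u = 2 * u * ln u + 2 * (1 - u) * ln (1 - u) + 1"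

definition unif01 :: "real measure" where
  "unif01 = uniform_measure lborel {0<..<1}"

text \<open>The law M of the limiting Quicksort variable Y: the law with mean zero, finite variance,
  satisfying Y =d U Y + (1-U) Z + g(U) with U, Y, Z independent, Z =d Y, U uniform on (0,1).\<close>
definition is_quicksort_limit_law :: "real measure \<Rightarrow> bool" where
  "is_quicksort_limit_law M \<longleftrightarrow>
     real_distribution M \<and>
     integrable M (\<lambda>x. x ^ 2) \<and>
     (\<integral>x. x \<partial>M) = 0 \<and>
     M = distr (unif01 \<Otimes>\<^sub>M (M \<Otimes>\<^sub>M M)) borel
           (\<lambda>(u, y, z). u * y + (1 - u) * z + qs_toll u)"

end

theory Submission
  imports Defs
begin

text \<open>Conditioning on \<open>Y\<close> and \<open>Z\<close> writes \<open>\<phi>(t)\<close> as an average of oscillatory integrals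
  \<open>\<integral>\<^sub>0\<^sup>1 exp (i t (c + d u + g u)) du\<close>, and \<open>g'' u = 2 / (u (1 - u)) \<ge> 8\<close>, so van der Corput's
  second-derivative argument bounds each of them. Where the derivative of the phase has modulus at
  most \<open>\<delta>\<close>, an interval of length at most \<open>2 \<delta> / (8 |t|)\<close>, bound the integrand by 1. On the two
  remaining pieces the derivative is monotone and of modulus at least \<open>\<delta>\<close>, so integration by
  parts gives at most \<open>2 / \<delta>\<close> each; as \<open>g'\<close> is unbounded near 0 and 1, this is done on compact
  subintervals first. The choice \<open>\<delta> = 4 sqrt |t|\<close> yields \<open>2 / sqrt |t|\<close>.\<close>

lemma has_vector_derivative_iexp_div_derivative:
  fixes \<phi> \<phi>' \<phi>'' :: "real \<Rightarrow> real"
  assumes "(\<phi> has_real_derivative \<phi>' u) (at u)" "(\<phi>' has_real_derivative \<phi>'' u) (at u)" "\<phi>' u \<noteq> 0"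
  shows "((\<lambda>u. iexp (\<phi> u) / (\<i> * \<phi>' u)) has_vector_derivative
           iexp (\<phi> u) + \<i> * iexp (\<phi> u) * (\<phi>'' u / (\<phi>' u)\<^sup>2)) (at u within S)"
proof -
  have "((\<lambda>u. iexp (\<phi> u) * of_real (inverse (\<phi>' u)) * (- \<i>)) has_vector_derivative
      (iexp (\<phi> u) * of_real (- \<phi>'' u / (\<phi>' u)\<^sup>2) + (\<phi>' u *\<^sub>R (\<i> * iexp (\<phi> u))) * of_real (inverse (\<phi>' u))) * (- \<i>))
      (at u within S)"
  proof (intro has_vector_derivative_mult_left has_vector_derivative_mult has_vector_derivative_of_real)
    show "((\<lambda>u. iexp (\<phi> u)) has_vector_derivative \<phi>' u *\<^sub>R (\<i> * iexp (\<phi> u))) (at u within S)"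
      using vector_diff_chain_within[of \<phi> "\<phi>' u" u S iexp "\<i> * iexp (\<phi> u)"] assms(1)
        has_vector_derivative_iexp
      by (simp add: o_def has_real_derivative_iff_has_vector_derivative has_vector_derivative_at_within)
    show "((\<lambda>u. inverse (\<phi>' u)) has_real_derivative - \<phi>'' u / (\<phi>' u)\<^sup>2) (at u within S)"
      using has_field_derivative_at_within[OF DERIV_inverse_fun[OF assms(2,3)]]
      by (simp add: power2_eq_square divide_inverse)
  qed
  moreover have "(\<lambda>u. iexp (\<phi> u) * of_real (inverse (\<phi>' u)) * (- \<i>)) = (\<lambda>u. iexp (\<phi> u) / (\<i> * \<phi>' u))"
    by (simp add: divide_inverse_commute inverse_mult_distrib mult_ac)
  moreover have "(iexp (\<phi> u) * of_real (- \<phi>'' u / (\<phi>' u)\<^sup>2) + (\<phi>' u *\<^sub>R (\<i> * iexp (\<phi> u))) * of_real (inverse (\<phi>' u))) * (- \<i>)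
      = iexp (\<phi> u) + \<i> * iexp (\<phi> u) * (\<phi>'' u / (\<phi>' u)\<^sup>2)"
    using assms(3) by (simp add: scaleR_conv_of_real field_simps)
  ultimately show ?thesis by simp
qed

lemma norm_integral_iexp_le_by_parts:
  fixes \<phi> \<phi>' \<phi>'' :: "real \<Rightarrow> real"
  assumes "p \<le> q"
    and \<phi>': "\<And>u. u \<in> {p..q} \<Longrightarrow> (\<phi> has_real_derivative \<phi>' u) (at u)"
    and \<phi>'': "\<And>u. u \<in> {p..q} \<Longrightarrow> (\<phi>' has_real_derivative \<phi>'' u) (at u)"
    and nonzero: "\<And>u. u \<in> {p..q} \<Longrightarrow> \<phi>' u \<noteq> 0"
    and convex: "\<And>u. u \<in> {p..q} \<Longrightarrow> 0 \<le> \<phi>'' u"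
  shows "norm (integral {p..q} (\<lambda>u. iexp (\<phi> u)))
           \<le> 1 / \<bar>\<phi>' p\<bar> + 1 / \<bar>\<phi>' q\<bar> + (1 / \<phi>' p - 1 / \<phi>' q)"
proof -
  define F where "F u = iexp (\<phi> u) / (\<i> * \<phi>' u)" for u
  define R where "R u = \<i> * iexp (\<phi> u) * (\<phi>'' u / (\<phi>' u)\<^sup>2)" for u
  have F: "((\<lambda>u. iexp (\<phi> u) + R u) has_integral F q - F p) {p..q}"
    unfolding F_def R_def
    by (intro fundamental_theorem_of_calculus \<open>p \<le> q\<close> has_vector_derivative_iexp_div_derivative
          \<phi>' \<phi>'' nonzero)
  have R_bound: "((\<lambda>u. \<phi>'' u / (\<phi>' u)\<^sup>2) has_integral 1 / \<phi>' p - 1 / \<phi>' q) {p..q}"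
  proof -
    have "((\<lambda>u. - inverse (\<phi>' u)) has_vector_derivative \<phi>'' u / (\<phi>' u)\<^sup>2) (at u within {p..q})"
      if "u \<in> {p..q}" for u
      using DERIV_minus[OF DERIV_inverse_fun[OF \<phi>''[OF that] nonzero[OF that]]]
      by (simp add: has_real_derivative_iff_has_vector_derivative[symmetric]
          has_field_derivative_at_within power2_eq_square divide_inverse)
    from fundamental_theorem_of_calculus[OF \<open>p \<le> q\<close> this] show ?thesis
      by (simp add: divide_inverse)
  qed
  have "continuous_on {p..q} \<phi>"
    using \<phi>' by (meson DERIV_continuous continuous_at_imp_continuous_on)
  then have int_iexp: "(\<lambda>u. iexp (\<phi> u)) integrable_on {p..q}"
    by (intro integrable_continuous_interval continuous_intros)
  then have int_R: "R integrable_on {p..q}"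
    using integrable_diff[OF has_integral_integrable[OF F] int_iexp] by simp
  have "integral {p..q} (\<lambda>u. iexp (\<phi> u)) = (F q - F p) - integral {p..q} R"
    using integral_unique[OF F] integral_add[OF int_iexp int_R] by (simp add: algebra_simps)
  then have "norm (integral {p..q} (\<lambda>u. iexp (\<phi> u))) \<le> norm (F q) + norm (F p) + norm (integral {p..q} R)"
    using norm_triangle_ineq4[of "F q - F p" "integral {p..q} R"] norm_triangle_ineq4[of "F q" "F p"]
    by simp
  moreover have "norm (integral {p..q} R) \<le> 1 / \<phi>' p - 1 / \<phi>' q"
    using integral_norm_bound_integral[OF int_R has_integral_integrable[OF R_bound]]
      integral_unique[OF R_bound] convex
    by (simp add: R_def norm_mult norm_divide norm_power)
  moreover have "norm (F u) = 1 / \<bar>\<phi>' u\<bar>" for u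
    by (simp add: F_def norm_divide norm_mult)
  ultimately show ?thesis
    by simp
qed

lemma norm_integral_iexp_le_first_derivative:
  fixes \<phi> \<phi>' \<phi>'' :: "real \<Rightarrow> real"
  assumes "p \<le> q" "0 < \<delta>"
    and \<phi>': "\<And>u. u \<in> {p..q} \<Longrightarrow> (\<phi> has_real_derivative \<phi>' u) (at u)"
    and \<phi>'': "\<And>u. u \<in> {p..q} \<Longrightarrow> (\<phi>' has_real_derivative \<phi>'' u) (at u)"
    and convex: "\<And>u. u \<in> {p..q} \<Longrightarrow> 0 \<le> \<phi>'' u"
    and away: "\<delta> \<le> \<phi>' p \<or> \<phi>' q \<le> - \<delta>"
  shows "norm (integral {p..q} (\<lambda>u. iexp (\<phi> u))) \<le> 2 / \<delta>"
proof -
  have "\<exists>y. (\<phi>' has_real_derivative y) (at x) \<and> 0 \<le> y" if "x \<in> {p..q}" for x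
    using \<phi>'' convex that by blast
  then have mono: "\<phi>' p \<le> \<phi>' u \<and> \<phi>' u \<le> \<phi>' q" if "u \<in> {p..q}" for u
    using that by (intro conjI DERIV_nonneg_imp_nondecreasing[where f = \<phi>']) auto
  then have nonzero: "\<phi>' u \<noteq> 0" if "u \<in> {p..q}" for u
    using that away \<open>0 < \<delta>\<close> by force
  from \<open>p \<le> q\<close> \<phi>' \<phi>'' nonzero convex
  have by_parts: "norm (integral {p..q} (\<lambda>u. iexp (\<phi> u)))
      \<le> 1 / \<bar>\<phi>' p\<bar> + 1 / \<bar>\<phi>' q\<bar> + (1 / \<phi>' p - 1 / \<phi>' q)"
    by (rule norm_integral_iexp_le_by_parts)
  have "\<phi>' p \<le> \<phi>' q"
    using mono[of p] \<open>p \<le> q\<close> by auto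
  from away show ?thesis
  proof
    assume "\<delta> \<le> \<phi>' p"
    then have "1 / \<bar>\<phi>' p\<bar> + 1 / \<bar>\<phi>' q\<bar> + (1 / \<phi>' p - 1 / \<phi>' q) = 2 / \<phi>' p" "2 / \<phi>' p \<le> 2 / \<delta>"
      using \<open>\<phi>' p \<le> \<phi>' q\<close> \<open>0 < \<delta>\<close> by (auto simp: frac_le)
    with by_parts show ?thesis by linarith
  next
    assume "\<phi>' q \<le> - \<delta>"
    then have "1 / \<bar>\<phi>' p\<bar> + 1 / \<bar>\<phi>' q\<bar> + (1 / \<phi>' p - 1 / \<phi>' q) = 2 / - \<phi>' q"
      using \<open>\<phi>' p \<le> \<phi>' q\<close> \<open>0 < \<delta>\<close> by simp
    moreover have "2 / - \<phi>' q \<le> 2 / \<delta>"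
      using \<open>\<phi>' q \<le> - \<delta>\<close> \<open>0 < \<delta>\<close> by (intro frac_le) auto
    ultimately show ?thesis
      using by_parts by linarith
  qed
qed

lemma norm_integral_le_of_inner_intervals:
  fixes f :: "real \<Rightarrow> 'a::banach"
  assumes f: "f integrable_on {p..q}" and "p < q"
    and bounded: "\<And>u. u \<in> {p..q} \<Longrightarrow> norm (f u) \<le> B"
    and inner: "\<And>x y. p < x \<Longrightarrow> x \<le> y \<Longrightarrow> y < q \<Longrightarrow> norm (integral {x..y} f) \<le> K"
  shows "norm (integral {p..q} f) \<le> K"
proof (rule field_le_epsilon)
  fix e :: real
  assume "0 < e"
  have "0 \<le> B"
    using order_trans[OF norm_ge_zero bounded[of p]] \<open>p < q\<close> by simp
  define h where "h = min (e / (2 * B + 1)) ((q - p) / 2)"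
  have h: "0 < h" "p + h \<le> q - h"
    using \<open>0 < e\<close> \<open>0 \<le> B\<close> \<open>p < q\<close> min.cobounded2[of "e / (2 * B + 1)" "(q - p) / 2"]
    by (auto simp: h_def)
  have "2 * B * h \<le> 2 * B * (e / (2 * B + 1))"
    using \<open>0 \<le> B\<close> by (intro mult_left_mono) (auto simp: h_def)
  also have "\<dots> \<le> e"
    using \<open>0 < e\<close> \<open>0 \<le> B\<close> by (simp add: field_simps)
  finally have Bh: "2 * B * h \<le> e" .
  have sub: "f integrable_on {x..y}" if "p \<le> x" "y \<le> q" for x y
    using integrable_subinterval_real[OF f] that by simp
  have edge: "norm (integral {x..y} f) \<le> B * (y - x)" if "p \<le> x" "x \<le> y" "y \<le> q" for x y
    using integral_norm_bound_integral[OF sub integrable_const_ivl, of x y B] that bounded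
    by (auto simp: mult.commute)
  have "integral {p..q} f = integral {p..p + h} f + integral {p + h..q - h} f + integral {q - h..q} f"
    using h by (simp add: Henstock_Kurzweil_Integration.integral_combine sub)
  then have "norm (integral {p..q} f)
      \<le> norm (integral {p..p + h} f) + norm (integral {p + h..q - h} f) + norm (integral {q - h..q} f)"
    by (simp add: norm_triangle_le)
  also have "\<dots> \<le> B * h + K + B * h"
    using edge[of p "p + h"] edge[of "q - h" q] inner[of "p + h" "q - h"] h by auto
  finally show "norm (integral {p..q} f) \<le> K + e"
    using Bh by simp
qed

lemma norm_integral_iexp_le_second_derivative:
  fixes \<phi> \<phi>' \<phi>'' :: "real \<Rightarrow> real"
  assumes "a \<in> {p<..<q}" "b \<in> {p<..<q}" "0 < \<delta>" "0 < \<mu>"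
    and \<phi>': "\<And>u. u \<in> {p<..<q} \<Longrightarrow> (\<phi> has_real_derivative \<phi>' u) (at u)"
    and \<phi>'': "\<And>u. u \<in> {p<..<q} \<Longrightarrow> (\<phi>' has_real_derivative \<phi>'' u) (at u)"
    and convex: "\<And>u. u \<in> {p<..<q} \<Longrightarrow> \<mu> \<le> \<phi>'' u"
    and a: "\<phi>' a = - \<delta>" and b: "\<phi>' b = \<delta>"
    and int: "(\<lambda>u. iexp (\<phi> u)) integrable_on {p..q}"
  shows "norm (integral {p..q} (\<lambda>u. iexp (\<phi> u))) \<le> 4 / \<delta> + 2 * \<delta> / \<mu>"
proof -
  let ?f = "\<lambda>u. iexp (\<phi> u)"
  have growth: "\<phi>' x + \<mu> * (y - x) \<le> \<phi>' y" if "p < x" "x \<le> y" "y < q" for x y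
  proof -
    have "(\<lambda>u. \<phi>' u - \<mu> * u) x \<le> (\<lambda>u. \<phi>' u - \<mu> * u) y"
    proof (rule DERIV_nonneg_imp_nondecreasing[OF \<open>x \<le> y\<close>])
      fix u assume "x \<le> u" "u \<le> y"
      with that have u: "u \<in> {p<..<q}" by simp
      show "\<exists>d. ((\<lambda>u. \<phi>' u - \<mu> * u) has_real_derivative d) (at u) \<and> 0 \<le> d"
        using convex[OF u] \<phi>''[OF u] by (intro exI conjI derivative_eq_intros) auto
    qed
    then show ?thesis by (simp add: algebra_simps)
  qed
  have "a \<le> b"
  proof (rule ccontr)
    assume "\<not> a \<le> b"
    then have "\<delta> + \<mu> * (a - b) \<le> - \<delta>" "0 \<le> \<mu> * (a - b)"
      using growth[of b a] assms(1,2,4) a b by auto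
    with \<open>0 < \<delta>\<close> show False by linarith
  qed
  then have width: "b - a \<le> 2 * \<delta> / \<mu>"
    using growth[of a b] assms(1,2,4) a b by (simp add: field_simps)
  have sub: "?f integrable_on {x..y}" if "p \<le> x" "y \<le> q" for x y
    using integrable_subinterval_real[OF int] that by simp
  have tail: "norm (integral {x..y} ?f) \<le> 2 / \<delta>"
    if "p < x" "x \<le> y" "y < q" and away: "\<delta> \<le> \<phi>' x \<or> \<phi>' y \<le> - \<delta>" for x y
  proof (rule norm_integral_iexp_le_first_derivative[OF \<open>x \<le> y\<close> \<open>0 < \<delta>\<close> _ _ _ away])
    fix u assume "u \<in> {x..y}"
    with that have u: "u \<in> {p<..<q}" by auto
    show "(\<phi> has_real_derivative \<phi>' u) (at u)" by (rule \<phi>'[OF u])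
    show "(\<phi>' has_real_derivative \<phi>'' u) (at u)" by (rule \<phi>''[OF u])
    show "0 \<le> \<phi>'' u" using convex[OF u] \<open>0 < \<mu>\<close> by simp
  qed
  have left: "norm (integral {p..a} ?f) \<le> 2 / \<delta>"
  proof (rule norm_integral_le_of_inner_intervals[where B = 1])
    show "?f integrable_on {p..a}" "p < a"
      using assms(1) by (auto intro: sub)
    fix x y assume "p < x" "x \<le> y" "y < a"
    moreover have "\<phi>' y + \<mu> * (a - y) \<le> \<phi>' a" "0 \<le> \<mu> * (a - y)"
      using growth[of y a] \<open>p < x\<close> \<open>x \<le> y\<close> \<open>y < a\<close> assms(1,4) by auto
    then have "\<phi>' y \<le> - \<delta>"
      using a by linarith
    ultimately show "norm (integral {x..y} ?f) \<le> 2 / \<delta>"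
      using assms(1) by (intro tail) auto
  qed simp
  have right: "norm (integral {b..q} ?f) \<le> 2 / \<delta>"
  proof (rule norm_integral_le_of_inner_intervals[where B = 1])
    show "?f integrable_on {b..q}" "b < q"
      using assms(2) by (auto intro: sub)
    fix x y assume "b < x" "x \<le> y" "y < q"
    moreover have "\<phi>' b + \<mu> * (x - b) \<le> \<phi>' x" "0 \<le> \<mu> * (x - b)"
      using growth[of b x] \<open>b < x\<close> \<open>x \<le> y\<close> \<open>y < q\<close> assms(2,4) by auto
    then have "\<delta> \<le> \<phi>' x"
      using b by linarith
    ultimately show "norm (integral {x..y} ?f) \<le> 2 / \<delta>"
      using assms(2) by (intro tail) auto
  qed simp
  have middle: "norm (integral {a..b} ?f) \<le> b - a"
    using integral_norm_bound_integral[OF sub integrable_const_ivl, of a b 1] assms(1,2) \<open>a \<le> b\<close>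
    by simp
  have "integral {p..q} ?f = integral {p..a} ?f + integral {a..b} ?f + integral {b..q} ?f"
    using assms(1,2) \<open>a \<le> b\<close> by (simp add: Henstock_Kurzweil_Integration.integral_combine sub)
  then have "norm (integral {p..q} ?f)
      \<le> norm (integral {p..a} ?f) + norm (integral {a..b} ?f) + norm (integral {b..q} ?f)"
    by (simp add: norm_triangle_le)
  then show ?thesis
    using left middle right width by simp
qed

lemma has_real_derivative_qs_toll:
  assumes "u \<in> {0<..<1}"
  shows "(qs_toll has_real_derivative 2 * ln u - 2 * ln (1 - u)) (at u)"
proof -
  have "((\<lambda>u. 2 * u * ln u + 2 * (1 - u) * ln (1 - u) + 1) has_real_derivative
      2 * ln u + 2 * u * (1 / u) + (- 2 * ln (1 - u) + 2 * (1 - u) * (- 1 / (1 - u)))) (at u)"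
    using assms by (auto intro!: derivative_eq_intros)
  moreover have "2 * ln u + 2 * u * (1 / u) + (- 2 * ln (1 - u) + 2 * (1 - u) * (- 1 / (1 - u)))
      = 2 * ln u - 2 * ln (1 - u)"
    using assms by (simp add: field_simps)
  ultimately show ?thesis
    by (simp add: qs_toll_def[abs_def])
qed

lemma logit_logistic:
  fixes s :: real
  defines "x \<equiv> exp s / (1 + exp s)"
  shows "x \<in> {0<..<1}" and "ln x - ln (1 - x) = s"
proof -
  have pos: "0 < 1 + exp s"
    by (simp add: add_pos_pos)
  then have "1 - x = 1 / (1 + exp s)"
    by (simp add: x_def field_simps)
  with pos show "ln x - ln (1 - x) = s"
    by (simp add: x_def ln_div)
  show "x \<in> {0<..<1}"
    using pos by (simp add: x_def)
qed

lemma norm_integral_iexp_qs_toll_le: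
  fixes t c d :: real
  assumes "0 < t"
    and int: "(\<lambda>u. iexp (t * (c + d * u + qs_toll u))) integrable_on {0..1}"
  shows "norm (integral {0..1} (\<lambda>u. iexp (t * (c + d * u + qs_toll u)))) \<le> 2 / sqrt t"
proof -
  define \<phi>' where "\<phi>' u = t * (d + (2 * ln u - 2 * ln (1 - u)))" for u
  define \<delta> where "\<delta> = 4 * sqrt t"
  \<comment> \<open>\<open>\<phi>' a = - \<delta>\<close> and \<open>\<phi>' b = \<delta>\<close>, solved by inverting the logit \<open>u \<mapsto> ln u - ln (1 - u)\<close>\<close>
  define a where "a = exp ((- \<delta> / t - d) / 2) / (1 + exp ((- \<delta> / t - d) / 2))"
  define b where "b = exp ((\<delta> / t - d) / 2) / (1 + exp ((\<delta> / t - d) / 2))"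
  have "0 < \<delta>"
    using \<open>0 < t\<close> by (simp add: \<delta>_def)
  have "8 * t \<le> t * (2 / u + 2 / (1 - u))" if "u \<in> {0<..<1}" for u
  proof -
    have "u * (1 - u) \<le> 1 / 4"
      using zero_le_power2[of "1 - 2 * u"] by (simp add: power2_eq_square algebra_simps)
    then have "8 \<le> 2 / (u * (1 - u))"
      using that by (simp add: field_simps)
    also have "\<dots> = 2 / u + 2 / (1 - u)"
      using that by (simp add: field_simps)
    finally show ?thesis
      using \<open>0 < t\<close> by simp
  qed
  moreover have "\<phi>' a = - \<delta>" "\<phi>' b = \<delta>"
    using \<open>0 < t\<close> logit_logistic(2) by (simp_all add: \<phi>'_def a_def b_def field_simps)
  moreover have "a \<in> {0<..<1}" "b \<in> {0<..<1}"
    unfolding a_def b_def by (rule logit_logistic(1))+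
  ultimately have "norm (integral {0..1} (\<lambda>u. iexp (t * (c + d * u + qs_toll u))))
      \<le> 4 / \<delta> + 2 * \<delta> / (8 * t)"
    using \<open>0 < t\<close> \<open>0 < \<delta>\<close> int has_real_derivative_qs_toll
    by (intro norm_integral_iexp_le_second_derivative[where \<phi>' = \<phi>'
          and \<phi>'' = "\<lambda>u. t * (2 / u + 2 / (1 - u))"])
       (auto simp: \<phi>'_def[abs_def] intro!: derivative_eq_intros)
  also have "\<dots> = 2 / sqrt t"
    using \<open>0 < t\<close> real_sqrt_mult_self[of t] by (simp add: \<delta>_def field_simps del: real_sqrt_mult_self)
  finally show ?thesis .
qed

lemma borel_measurable_qs_toll [measurable]: "qs_toll \<in> borel_measurable borel"
  unfolding qs_toll_def by measurable

lemma sets_unif01 [measurable_cong]: "sets unif01 = sets borel"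
  by (simp add: unif01_def)

lemma prob_space_unif01: "prob_space unif01"
  unfolding unif01_def by (intro prob_space_uniform_measure) auto

lemma integral_unif01:
  fixes g :: "real \<Rightarrow> complex"
  assumes [measurable]: "g \<in> borel_measurable borel" and bounded: "\<And>u. norm (g u) \<le> 1"
  shows "(\<integral>u. g u \<partial>unif01) = integral {0..1} g" and "g integrable_on {0..1}"
proof -
  have "set_integrable lborel {0<..<1} g"
    unfolding set_integrable_def
    by (rule integrableI_bounded_set[where A = "{0<..<1}" and B = 1]) (auto simp: bounded)
  note lebesgue_eq_HK = set_borel_integral_eq_integral[OF this]
  have density: "unif01 = density lborel (\<lambda>u. ennreal (indicator {0<..<1} u))"
    by (simp add: unif01_def uniform_measure_def ennreal_indicator divide_ennreal_def)
  have "(\<integral>u. g u \<partial>unif01) = (\<integral>u. indicator {0<..<1} u *\<^sub>R g u \<partial>lborel)"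
    unfolding density by (rule integral_density) auto
  also have "\<dots> = (LINT u:{0<..<1}|lborel. g u)"
    by (simp add: set_lebesgue_integral_def)
  finally have "(\<integral>u. g u \<partial>unif01) = (LINT u:{0<..<1}|lborel. g u)" .
  then show "(\<integral>u. g u \<partial>unif01) = integral {0..1} g"
    by (simp add: lebesgue_eq_HK(2) integral_open_interval_real)
  show "g integrable_on {0..1}"
    using lebesgue_eq_HK(1) integrable_on_open_interval_real by blast
qed

lemma norm_integral_unif01_iexp_qs_toll_le:
  fixes t y z :: real
  assumes "t \<noteq> 0"
  shows "norm (\<integral>u. iexp (t * (u * y + (1 - u) * z + qs_toll u)) \<partial>unif01) \<le> 2 / sqrt \<bar>t\<bar>"
proof -
  have pos: "norm (\<integral>u. iexp (t * (u * y + (1 - u) * z + qs_toll u)) \<partial>unif01) \<le> 2 / sqrt t"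
    if "0 < t" for t
  proof -
    let ?g = "\<lambda>u. iexp (t * (z + (y - z) * u + qs_toll u))"
    have "?g \<in> borel_measurable borel"
      by measurable
    moreover have "norm (?g u) \<le> 1" for u
      by simp
    ultimately have HK: "(\<integral>u. ?g u \<partial>unif01) = integral {0..1} ?g" "?g integrable_on {0..1}"
      by (rule integral_unif01)+
    have affine: "(\<lambda>u. iexp (t * (u * y + (1 - u) * z + qs_toll u))) = ?g"
      by (simp add: algebra_simps)
    show ?thesis
      unfolding affine HK(1) by (rule norm_integral_iexp_qs_toll_le[OF that HK(2)])
  qed
  show ?thesis
  proof (cases "0 < t")
    case False
    have "iexp (t * x) = cnj (iexp ((- t) * x))" for x
      by (simp add: exp_cnj)
    then have "(\<integral>u. iexp (t * (u * y + (1 - u) * z + qs_toll u)) \<partial>unif01)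
        = cnj (\<integral>u. iexp ((- t) * (u * y + (1 - u) * z + qs_toll u)) \<partial>unif01)"
      by (simp only: Bochner_Integration.integral_cnj)
    then show ?thesis
      using pos[of "- t"] False assms by simp
  qed (use pos in simp)
qed

lemma norm_char_distr_le:
  fixes P :: "'a measure" and Q :: "'b measure" and H :: "'a \<times> 'b \<Rightarrow> real"
  assumes "prob_space P" "prob_space Q"
    and [measurable]: "H \<in> borel_measurable (P \<Otimes>\<^sub>M Q)"
    and bound: "\<And>y. y \<in> space Q \<Longrightarrow> norm (\<integral>x. iexp (t * H (x, y)) \<partial>P) \<le> B"
  shows "norm (char (distr (P \<Otimes>\<^sub>M Q) borel H) t) \<le> B"
proof -
  interpret pair_prob_space P Q
    using assms(1,2) by (simp add: pair_prob_space_def pair_sigma_finite_def prob_space_imp_sigma_finite)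
  let ?f = "\<lambda>x y. iexp (t * H (x, y))"
  have int: "integrable (P \<Otimes>\<^sub>M Q) (case_prod ?f)"
    by (intro integrable_const_bound[where B = 1]) auto
  have "char (distr (P \<Otimes>\<^sub>M Q) borel H) t = integral\<^sup>L (P \<Otimes>\<^sub>M Q) (case_prod ?f)"
    by (simp add: char_def integral_distr split_beta')
  also have "\<dots> = (\<integral>y. (\<integral>x. ?f x y \<partial>P) \<partial>Q)"
    by (rule integral_snd[OF int, symmetric])
  also have "norm \<dots> \<le> (\<integral>y. norm (\<integral>x. ?f x y \<partial>P) \<partial>Q)"
    by (rule integral_norm_bound)
  also have "\<dots> \<le> B"
    using bound integrable_snd[OF int] by (intro M2.integral_le_const integrable_norm) auto
  finally show ?thesis .
qed

theorem lemma2p4: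
  fixes M :: "real measure" and t :: real
  assumes "is_quicksort_limit_law M"
    and "t \<noteq> 0"
  shows "norm (char M t) \<le> 2 * \<bar>t\<bar> powr (-1/2)"
proof -
  define H where "H = (\<lambda>(u, y, z). u * y + (1 - u) * z + qs_toll u)"
  have law: "M = distr (unif01 \<Otimes>\<^sub>M (M \<Otimes>\<^sub>M M)) borel H"
    using assms(1) unfolding is_quicksort_limit_law_def H_def by auto
  interpret real_distribution M
    using assms(1) unfolding is_quicksort_limit_law_def by auto
  have [measurable_cong]: "sets M = sets borel"
    by simp
  have "norm (char (distr (unif01 \<Otimes>\<^sub>M (M \<Otimes>\<^sub>M M)) borel H) t) \<le> 2 / sqrt \<bar>t\<bar>"
  proof (rule norm_char_distr_le)
    show "prob_space (M \<Otimes>\<^sub>M M)"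
      by (intro prob_space_pair prob_space_axioms)
    show "H \<in> borel_measurable (unif01 \<Otimes>\<^sub>M (M \<Otimes>\<^sub>M M))"
      unfolding H_def by measurable
    show "norm (\<integral>u. iexp (t * H (u, yz)) \<partial>unif01) \<le> 2 / sqrt \<bar>t\<bar>" for yz
      using norm_integral_unif01_iexp_qs_toll_le[OF assms(2), of "fst yz" "snd yz"]
      by (simp add: H_def split_beta)
  qed (rule prob_space_unif01)
  moreover have "2 / sqrt \<bar>t\<bar> = 2 * \<bar>t\<bar> powr (-1/2)"
    using assms(2) by (simp add: powr_minus_divide powr_half_sqrt[symmetric])
  ultimately show ?thesis
    using law by simp
qed

end
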